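(* Let $G$ be a graph with $n$ vertices. Then \[\chi(G) \leq \frac{1}{2} \left(\omega(G) + \frac{\Delta(G) + 1 + n}{2} \right) - \frac{\eta(G)}{4}.\]
   Context: All graphs are finite and simple with non-empty vertex set. $\chi$ is the chromatic number, $\omega$ the clique number, $\Delta$ the maximum degree. The chromatic excess of $G$ is $\eta(G) = \max_{H} \left(|H| - 3\chi(H)\right)$, where the maximum ranges over all induced subgraphs $H$ of $G$ with non-empty vertex set and $|H|$ is the number of vertices of $H$. *)

theory Defs
  imports Main "HOL-Library.Extended_Nat"
begin

definition simple_graph :: "'a set \<Rightarrow> ('a \<Rightarrow> 'a \<Rightarrow> bool) \<Rightarrow> bool" where
  "simple_graph V E \<longleftrightarrow> finite V \<and> V \<noteq> {} \<and>
     (\<forall>u v. E u v \<longrightarrow> u \<in> V \<and> v \<in> V) \<and>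
     (\<forall>u v. E u v \<longrightarrow> E v u) \<and> (\<forall>v. \<not> E v v)"

definition proper_colouring :: "'a set \<Rightarrow> ('a \<Rightarrow> 'a \<Rightarrow> bool) \<Rightarrow> nat \<Rightarrow> ('a \<Rightarrow> nat) \<Rightarrow> bool" where
  "proper_colouring S E k c \<longleftrightarrow> (\<forall>v\<in>S. c v < k) \<and> (\<forall>u\<in>S. \<forall>v\<in>S. E u v \<longrightarrow> c u \<noteq> c v)"

definition chi :: "'a set \<Rightarrow> ('a \<Rightarrow> 'a \<Rightarrow> bool) \<Rightarrow> nat" where
  "chi S E = (LEAST k. \<exists>c. proper_colouring S E k c)"

definition is_clique :: "('a \<Rightarrow> 'a \<Rightarrow> bool) \<Rightarrow> 'a set \<Rightarrow> bool" where
  "is_clique E K \<longleftrightarrow> (\<forall>u\<in>K. \<forall>v\<in>K. u \<noteq> v \<longrightarrow> E u v)"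

definition omega :: "'a set \<Rightarrow> ('a \<Rightarrow> 'a \<Rightarrow> bool) \<Rightarrow> nat" where
  "omega S E = Max {card K | K. K \<subseteq> S \<and> is_clique E K}"

definition degree :: "'a set \<Rightarrow> ('a \<Rightarrow> 'a \<Rightarrow> bool) \<Rightarrow> 'a \<Rightarrow> nat" where
  "degree S E v = card {u\<in>S. E v u}"

definition max_degree :: "'a set \<Rightarrow> ('a \<Rightarrow> 'a \<Rightarrow> bool) \<Rightarrow> nat" where
  "max_degree S E = Max (degree S E ` S)"

definition eta :: "'a set \<Rightarrow> ('a \<Rightarrow> 'a \<Rightarrow> bool) \<Rightarrow> int" where
  "eta V E = Max {int (card H) - 3 * int (chi H E) | H. H \<subseteq> V \<and> H \<noteq> {}}"

end

theory Submission
  imports Defs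
begin

text \<open>
  Let \<open>H\<close> be a largest vertex set attaining the chromatic excess, i.e. maximising
  \<open>|H| - 3 \<chi>(H)\<close>. A vertex outside \<open>H\<close> sees every colour class of an optimal colouring
  of \<open>H\<close> (otherwise adding it raises the excess), and \<open>S = V - H\<close> contains no independent
  triple (adding one costs at most one colour, so the excess stays maximal while \<open>H\<close> grows).

  In \<open>S\<close>, take a maximum matching \<open>W\<close> of the complement. Its pairs are colour classes,
  so \<open>2 \<chi>(S) \<le> |S| + |S - W|\<close>. Since there is no independent triple and no augmenting path
  of length 3 or 5, the unmatched vertices, the non-neighbours \<open>N(x)\<close> of an unmatched
  vertex \<open>x\<close> and their partners contain two cliques of total size at least
  \<open>2 |S - W| + |N(x)|\<close>. With \<open>\<chi>(V) \<le> \<chi>(H) + \<chi>(S)\<close> and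
  \<open>deg_V(x) \<ge> \<chi>(H) + deg_S(x)\<close> this gives \<open>4 \<chi> + \<eta> \<le> 2 \<omega> + \<Delta> + 1 + n\<close>.
\<close>

lemma chi_le:
  assumes "proper_colouring S E k c"
  shows "chi S E \<le> k"
  unfolding chi_def by (rule Least_le) (use assms in blast)

lemma ex_proper_colouring_card_image:
  assumes "finite S" and "\<forall>u\<in>S. \<forall>v\<in>S. E u v \<longrightarrow> f u \<noteq> f v"
  shows "\<exists>c. proper_colouring S E (card (f ` S)) c"
proof -
  obtain h where h: "bij_betw h (f ` S) {0..<card (f ` S)}"
    using ex_bij_betw_finite_nat[OF finite_imageI[OF assms(1)]] by blast
  have "proper_colouring S E (card (f ` S)) (h \<circ> f)"
    unfolding proper_colouring_def
  proof (intro conjI ballI impI)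
    fix v assume "v \<in> S"
    then show "(h \<circ> f) v < card (f ` S)" using bij_betwE[OF h] by auto
  next
    fix u v assume "u \<in> S" "v \<in> S" "E u v"
    then have "f u \<noteq> f v" "f u \<in> f ` S" "f v \<in> f ` S"
      using assms(2) by auto
    then show "(h \<circ> f) u \<noteq> (h \<circ> f) v"
      using bij_betw_imp_inj_on[OF h] by (simp add: inj_on_eq_iff)
  qed
  then show ?thesis by blast
qed

lemma chi_le_card_image:
  assumes "finite S" and "\<forall>u\<in>S. \<forall>v\<in>S. E u v \<longrightarrow> f u \<noteq> f v"
  shows "chi S E \<le> card (f ` S)"
  using ex_proper_colouring_card_image[OF assms] by (elim exE) (rule chi_le)

lemma finite_clique_sizes:
  assumes "finite S"
  shows "finite {card K | K. K \<subseteq> S \<and> is_clique E K}"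
proof (rule finite_subset)
  show "{card K | K. K \<subseteq> S \<and> is_clique E K} \<subseteq> card ` Pow S"
    by blast
  show "finite (card ` Pow S)"
    using assms by simp
qed

lemma card_le_omega:
  assumes "finite S" "K \<subseteq> S" "is_clique E K"
  shows "card K \<le> omega S E"
  unfolding omega_def
proof (rule Max_ge)
  show "card K \<in> {card K | K. K \<subseteq> S \<and> is_clique E K}"
    using assms(2,3) by blast
qed (rule finite_clique_sizes[OF assms(1)])

lemma omega_mono:
  assumes "finite V" "S \<subseteq> V"
  shows "omega S E \<le> omega V E"
  unfolding omega_def
proof (rule Max_mono)
  show "{card K | K. K \<subseteq> S \<and> is_clique E K} \<noteq> {}"
    unfolding is_clique_def by blast
  show "{card K | K. K \<subseteq> S \<and> is_clique E K} \<subseteq> {card K | K. K \<subseteq> V \<and> is_clique E K}"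
    using assms(2) by blast
qed (rule finite_clique_sizes[OF assms(1)])

lemma degree_le_max_degree:
  "finite V \<Longrightarrow> x \<in> V \<Longrightarrow> degree V E x \<le> max_degree V E"
  unfolding max_degree_def by simp

locale simple_edges =
  fixes E :: "'a \<Rightarrow> 'a \<Rightarrow> bool"
  assumes edge_sym: "E u v \<Longrightarrow> E v u"
    and edge_irrefl: "\<not> E v v"
begin

lemma ex_chi_colouring:
  assumes "finite S"
  shows "\<exists>c. proper_colouring S E (chi S E) c"
proof -
  have "\<exists>k c. proper_colouring S E k c"
    using ex_proper_colouring_card_image[of S E id] assms edge_irrefl by auto
  then show ?thesis
    unfolding chi_def by (rule LeastI_ex)
qed

lemma chi_union_le:
  assumes "finite A" "finite B"
  shows "chi (A \<union> B) E \<le> chi A E + chi B E"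
proof -
  obtain ca where ca: "proper_colouring A E (chi A E) ca"
    using ex_chi_colouring[OF assms(1)] by blast
  obtain cb where cb: "proper_colouring B E (chi B E) cb"
    using ex_chi_colouring[OF assms(2)] by blast
  let ?c = "\<lambda>v. if v \<in> A then ca v else chi A E + cb v"
  have "proper_colouring (A \<union> B) E (chi A E + chi B E) ?c"
    unfolding proper_colouring_def
  proof (intro conjI ballI impI)
    fix v assume "v \<in> A \<union> B"
    then show "?c v < chi A E + chi B E"
      using ca cb unfolding proper_colouring_def by auto
  next
    fix u v assume "u \<in> A \<union> B" "v \<in> A \<union> B" "E u v"
    then show "?c u \<noteq> ?c v"
      using ca cb unfolding proper_colouring_def by (cases "u \<in> A"; cases "v \<in> A") auto
  qed
  then show ?thesis
    by (rule chi_le)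
qed

lemma chi_independent_le_1:
  assumes "\<forall>u\<in>J. \<forall>v\<in>J. \<not> E u v"
  shows "chi J E \<le> 1"
  using assms by (intro chi_le[of J E 1 "\<lambda>_. 0"]) (simp add: proper_colouring_def)

lemma proper_colouring_insert:
  assumes "proper_colouring A E k c" "i < k" "\<forall>u\<in>A. E x u \<longrightarrow> c u \<noteq> i"
  shows "proper_colouring (insert x A) E k (c(x := i))"
  unfolding proper_colouring_def
proof (intro conjI ballI impI)
  fix v assume "v \<in> insert x A"
  then show "(c(x := i)) v < k"
    using assms(1,2) unfolding proper_colouring_def by auto
next
  fix u v assume uv: "u \<in> insert x A" "v \<in> insert x A" "E u v"
  then have "u \<noteq> v"
    using edge_irrefl by blast
  then consider "u = x" "v \<in> A" "v \<noteq> x" | "v = x" "u \<in> A" "u \<noteq> x"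
    | "u \<in> A" "v \<in> A" "u \<noteq> x" "v \<noteq> x"
    using uv(1,2) by blast
  then show "(c(x := i)) u \<noteq> (c(x := i)) v"
  proof cases
    case 1
    then show ?thesis using assms(3) uv(3) by auto
  next
    case 2
    then show ?thesis using assms(3) edge_sym[OF uv(3)] by auto
  next
    case 3
    then show ?thesis using assms(1) uv(3) unfolding proper_colouring_def by auto
  qed
qed

lemma chi_le_max_degree_plus_1:
  assumes "finite V"
  shows "chi V E \<le> max_degree V E + 1"
proof -
  have "\<exists>c. proper_colouring A E (max_degree V E + 1) c" if "A \<subseteq> V" for A
    using finite_subset[OF that assms] that
  proof (induction A rule: finite_induct)
    case empty
    then show ?case
      unfolding proper_colouring_def by blast
  next
    case (insert x A)
    then obtain c where c: "proper_colouring A E (max_degree V E + 1) c"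
      by blast
    let ?N = "{u\<in>A. E x u}"
    have "card (c ` ?N) \<le> card ?N"
      using insert.hyps(1) by (intro card_image_le) simp
    also have "\<dots> \<le> degree V E x"
      unfolding degree_def using insert.prems assms by (intro card_mono) auto
    also have "\<dots> \<le> max_degree V E"
      using insert.prems assms by (intro degree_le_max_degree) auto
    finally have "card (c ` ?N) < card {0..<max_degree V E + 1}"
      by simp
    moreover have "finite (c ` ?N)"
      using insert.hyps(1) by simp
    ultimately have "\<not> {0..<max_degree V E + 1} \<subseteq> c ` ?N"
      by (meson card_mono not_le)
    then obtain i where "i \<in> {0..<max_degree V E + 1}" "i \<notin> c ` ?N"
      by blast
    then show ?case
      using proper_colouring_insert[OF c, of i x] by auto
  qed
  then show ?thesis
    using chi_le by blast
qed

end

text \<open>\<open>W\<close> is the vertex set of a matching of the complement of \<open>G[S]\<close>, and \<open>p\<close> sends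
  every matched vertex to its partner.\<close>

definition co_matching :: "'a set \<Rightarrow> ('a \<Rightarrow> 'a \<Rightarrow> bool) \<Rightarrow> 'a set \<Rightarrow> ('a \<Rightarrow> 'a) \<Rightarrow> bool" where
  "co_matching S E W p \<longleftrightarrow> W \<subseteq> S \<and> (\<forall>a\<in>W. p a \<in> W \<and> p a \<noteq> a \<and> p (p a) = a \<and> \<not> E a (p a))"

lemma co_matching_add_pair:
  assumes "co_matching S E W p" "x \<in> S - W" "y \<in> S - W" "x \<noteq> y" "\<not> E x y" "\<not> E y x"
  shows "co_matching S E (insert x (insert y W)) (p(x := y, y := x))"
  using assms unfolding co_matching_def by auto

lemma co_matching_remove_pair:
  assumes "co_matching S E W p" "a \<in> W"
  shows "co_matching S E (W - {a, p a}) p"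
proof -
  have W: "W \<subseteq> S" and partner: "\<And>z. z \<in> W \<Longrightarrow> p z \<in> W \<and> p z \<noteq> z \<and> p (p z) = z \<and> \<not> E z (p z)"
    using assms(1) unfolding co_matching_def by blast+
  have "p z \<notin> {a, p a}" if z: "z \<in> W - {a, p a}" for z
  proof
    assume "p z \<in> {a, p a}"
    then have "z \<in> {p a, p (p a)}"
      using partner z by force
    then show False
      using partner assms(2) z by auto
  qed
  then show ?thesis
    using W partner unfolding co_matching_def by blast
qed

lemma ex_maximum_co_matching:
  assumes "finite S"
  shows "\<exists>W p. co_matching S E W p \<and> (\<forall>W' p'. co_matching S E W' p' \<longrightarrow> card W' \<le> card W)"
proof -
  have "\<exists>m. co_matching S E (fst m) (snd m) \<and>
      (\<forall>m'. co_matching S E (fst m') (snd m') \<longrightarrow> card (fst m') \<le> card (fst m))"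
  proof (rule ex_has_greatest_nat[where k = "({}, id)" and b = "card S + 1"])
    show "co_matching S E (fst ({}, id)) (snd ({}, id))"
      unfolding co_matching_def by simp
    show "\<forall>m. co_matching S E (fst m) (snd m) \<longrightarrow> card (fst m) < card S + 1"
      using card_mono[OF assms] unfolding co_matching_def by (simp add: le_imp_less_Suc)
  qed
  then show ?thesis
    by (metis fst_conv snd_conv)
qed

context simple_edges
begin

lemma chi_co_matching_le:
  assumes "finite S" "co_matching S E W p"
  shows "2 * chi S E + card W \<le> 2 * card S"
proof -
  have W: "W \<subseteq> S" and partner: "\<And>a. a \<in> W \<Longrightarrow> p a \<in> W \<and> p a \<noteq> a \<and> p (p a) = a \<and> \<not> E a (p a)"
    using assms(2) unfolding co_matching_def by blast+
  have finW: "finite W"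
    using W assms(1) finite_subset by blast
  define block where "block v = (if v \<in> W then {v, p v} else {v})" for v
  have "chi S E \<le> card (block ` S)"
  proof (rule chi_le_card_image[OF assms(1)], intro ballI impI notI)
    fix u v assume "u \<in> S" "v \<in> S" "E u v" "block u = block v"
    then have "v = u \<or> (u \<in> W \<and> v = p u)"
      unfolding block_def by (auto split: if_splits)
    then show False
      using \<open>E u v\<close> edge_irrefl partner by blast
  qed
  also have "block ` S = block ` W \<union> block ` (S - W)"
    using W by blast
  also have "card \<dots> \<le> card (block ` W) + card (block ` (S - W))"
    by (rule card_Un_le)
  also have "card (block ` (S - W)) \<le> card (S - W)"
    using assms(1) by (intro card_image_le) simp
  finally have chi_le: "chi S E \<le> card (block ` W) + card (S - W)"
    by simp
  have "2 * card (block ` W) = card (\<Union> (block ` W))"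
  proof (rule card_partition)
    show "finite (block ` W)" "finite (\<Union> (block ` W))"
      using finW partner unfolding block_def by auto
    fix c assume "c \<in> block ` W"
    then obtain a where "a \<in> W" "c = {a, p a}"
      unfolding block_def by auto
    then show "card c = 2"
      using partner[OF \<open>a \<in> W\<close>] unfolding card_2_iff by blast
  next
    have same_block: "block z = block a" if "a \<in> W" "z \<in> block a" for a z
      using that partner[OF \<open>a \<in> W\<close>] unfolding block_def by auto
    fix c1 c2 assume "c1 \<in> block ` W" "c2 \<in> block ` W" "c1 \<noteq> c2"
    then show "c1 \<inter> c2 = {}"
      using same_block by blast
  qed
  also have "\<Union> (block ` W) = W"
    using partner unfolding block_def by auto
  finally have "2 * card (block ` W) = card W" .
  moreover have "card (S - W) = card S - card W" "card W \<le> card S"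
    using W assms(1) finW by (simp_all add: card_Diff_subset card_mono)
  ultimately show ?thesis
    using chi_le by linarith
qed

end

definition no_independent_triple :: "'a set \<Rightarrow> ('a \<Rightarrow> 'a \<Rightarrow> bool) \<Rightarrow> bool" where
  "no_independent_triple S E \<longleftrightarrow>
     (\<forall>a\<in>S. \<forall>b\<in>S. \<forall>c\<in>S. a \<noteq> b \<and> a \<noteq> c \<and> b \<noteq> c \<longrightarrow> E a b \<or> E a c \<or> E b c)"

definition non_neighbours :: "'a set \<Rightarrow> ('a \<Rightarrow> 'a \<Rightarrow> bool) \<Rightarrow> 'a \<Rightarrow> 'a set" where
  "non_neighbours S E x = {y\<in>S. y \<noteq> x \<and> \<not> E x y}"

lemma no_independent_tripleD:
  assumes "no_independent_triple S E" "a \<in> S" "b \<in> S" "c \<in> S" "a \<noteq> b" "a \<noteq> c" "b \<noteq> c"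
    "\<not> E a b" "\<not> E a c"
  shows "E b c"
  using assms unfolding no_independent_triple_def by blast

context simple_edges
begin

lemma card_eq_Suc_degree_plus_non_neighbours:
  assumes "finite S" "x \<in> S"
  shows "card S = Suc (degree S E x + card (non_neighbours S E x))"
proof -
  let ?N = "{u\<in>S. E x u}" and ?M = "non_neighbours S E x"
  have "S = insert x (?N \<union> ?M)"
    using assms(2) unfolding non_neighbours_def by blast
  then have "card S = card (insert x (?N \<union> ?M))"
    by (rule arg_cong)
  also have "\<dots> = Suc (card ?N + card ?M)"
    using assms(1) edge_irrefl unfolding non_neighbours_def
    by (simp add: card_Un_disjoint disjoint_iff)
  finally show ?thesis
    unfolding degree_def .
qed

lemma clique_non_neighbours:
  assumes "no_independent_triple S E" "x \<in> S"
  shows "is_clique E (non_neighbours S E x)"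
  unfolding is_clique_def
proof (intro ballI impI)
  fix y z assume "y \<in> non_neighbours S E x" "z \<in> non_neighbours S E x" "y \<noteq> z"
  then show "E y z"
    using assms unfolding non_neighbours_def by (auto intro: no_independent_tripleD)
qed

text \<open>Augmenting along the alternating path \<open>x - a = p a - u\<close> (non-edges \<open>-\<close>, matched
  pairs \<open>=\<close>); likewise along \<open>x - b = p b - p a = a - w\<close> below.\<close>

lemma co_matching_augment_path3:
  assumes "co_matching S E W p" "a \<in> W" "x \<in> S - W" "u \<in> S - W" "x \<noteq> u"
    "\<not> E x a" "\<not> E u (p a)"
  shows "co_matching S E (insert x (insert u W)) (p(x := a, a := x, u := p a, p a := u))"
proof -
  have W: "W \<subseteq> S" and pa: "p a \<in> W" "p a \<noteq> a"
    using assms(1,2) unfolding co_matching_def by blast+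
  let ?W0 = "W - {a, p a}"
  have M0: "co_matching S E ?W0 p"
    using co_matching_remove_pair[OF assms(1,2)] .
  have M1: "co_matching S E (insert x (insert a ?W0)) (p(x := a, a := x))"
    by (rule co_matching_add_pair[OF M0]) (use assms W edge_sym in auto)
  have "co_matching S E (insert u (insert (p a) (insert x (insert a ?W0))))
      (p(x := a, a := x, u := p a, p a := u))"
    by (rule co_matching_add_pair[OF M1]) (use assms W pa edge_sym in auto)
  moreover have "insert u (insert (p a) (insert x (insert a ?W0))) = insert x (insert u W)"
    using assms(2) pa by auto
  ultimately show ?thesis
    by simp
qed

lemma co_matching_augment_path5:
  assumes "co_matching S E W p" "a \<in> W" "b \<in> W" "b \<noteq> a" "b \<noteq> p a" "x \<in> S - W" "w \<in> S - W"
    "x \<noteq> w" "\<not> E w a" "\<not> E (p a) (p b)" "\<not> E b x"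
  shows "co_matching S E (insert x (insert w W))
    (p(w := a, a := w, p a := p b, p b := p a, b := x, x := b))"
proof -
  have W: "W \<subseteq> S" and partner: "\<And>z. z \<in> W \<Longrightarrow> p z \<in> W \<and> p z \<noteq> z \<and> p (p z) = z"
    using assms(1) unfolding co_matching_def by blast+
  have pb: "p b \<noteq> a" "p b \<noteq> p a"
    using partner[OF assms(2)] partner[OF assms(3)] assms(4,5) by metis+
  let ?W0 = "W - {a, p a} - {b, p b}"
  have "co_matching S E (W - {a, p a}) p"
    using co_matching_remove_pair[OF assms(1,2)] .
  then have M0: "co_matching S E ?W0 p"
    by (rule co_matching_remove_pair) (use assms(3-5) in auto)
  have M1: "co_matching S E (insert w (insert a ?W0)) (p(w := a, a := w))"
    by (rule co_matching_add_pair[OF M0]) (use assms W edge_sym in auto)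
  have M2: "co_matching S E (insert (p a) (insert (p b) (insert w (insert a ?W0))))
      (p(w := a, a := w, p a := p b, p b := p a))"
    by (rule co_matching_add_pair[OF M1])
      (use assms W partner[OF assms(2)] partner[OF assms(3)] pb edge_sym in auto)
  have "co_matching S E
      (insert b (insert x (insert (p a) (insert (p b) (insert w (insert a ?W0))))))
      (p(w := a, a := w, p a := p b, p b := p a, b := x, x := b))"
    by (rule co_matching_add_pair[OF M2])
      (use assms W partner[OF assms(2)] partner[OF assms(3)] pb edge_sym in auto)
  moreover have "insert b (insert x (insert (p a) (insert (p b) (insert w (insert a ?W0)))))
      = insert x (insert w W)"
    using assms(2,3) partner[OF assms(2)] partner[OF assms(3)] by auto
  ultimately show ?thesis
    by simp
qed

end

locale max_co_matching = simple_edges +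
  fixes S W :: "'a set" and p :: "'a \<Rightarrow> 'a"
  assumes finite_S: "finite S"
    and no_triple: "no_independent_triple S E"
    and co_matching: "co_matching S E W p"
    and maximum: "co_matching S E W' p' \<Longrightarrow> card W' \<le> card W"
begin

lemma matched_subset: "W \<subseteq> S"
  using co_matching unfolding co_matching_def by blast

lemma partner:
  assumes "a \<in> W"
  shows "p a \<in> W" "p a \<noteq> a" "p (p a) = a" "\<not> E a (p a)"
  using co_matching assms unfolding co_matching_def by blast+

lemma finite_W: "finite W"
  using matched_subset finite_S by (rule finite_subset)

lemma no_augmentation:
  assumes "x \<in> S - W" "u \<in> S - W" "x \<noteq> u"
  shows "\<not> co_matching S E (insert x (insert u W)) q"
proof
  assume "co_matching S E (insert x (insert u W)) q"
  then have "card (insert x (insert u W)) \<le> card W"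
    by (rule maximum)
  then show False
    using assms finite_W by simp
qed

lemma clique_unmatched: "is_clique E (S - W)"
  unfolding is_clique_def
proof (intro ballI impI)
  fix u v assume uv: "u \<in> S - W" "v \<in> S - W" "u \<noteq> v"
  show "E u v"
  proof (rule ccontr)
    assume "\<not> E u v"
    then have "co_matching S E (insert u (insert v W)) (p(u := v, v := u))"
      using co_matching_add_pair[OF co_matching uv] edge_sym by blast
    then show False
      using no_augmentation[OF uv] by blast
  qed
qed

lemma non_neighbour_matched:
  assumes "x \<in> S - W" "a \<in> non_neighbours S E x"
  shows "a \<in> W"
proof (rule ccontr)
  assume "a \<notin> W"
  then have "a \<in> S - W" "a \<noteq> x" "\<not> E x a"
    using assms(2) unfolding non_neighbours_def by auto
  moreover have "x \<in> S - W" using assms(1) .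
  ultimately have "E x a"
    using clique_unmatched unfolding is_clique_def by simp
  then show False
    using \<open>\<not> E x a\<close> by simp
qed

lemma partner_adj_unmatched:
  assumes x: "x \<in> S - W" and a: "a \<in> non_neighbours S E x" and u: "u \<in> S - W"
  shows "E (p a) u"
proof (rule ccontr)
  assume pa_u: "\<not> E (p a) u"
  have aW: "a \<in> W"
    using non_neighbour_matched[OF x a] .
  have "a \<in> S" "a \<noteq> x" "\<not> E x a"
    using a unfolding non_neighbours_def by auto
  show False
  proof (cases "u = x")
    case True
    have "p a \<in> S" "x \<noteq> p a" "\<not> E x (p a)"
      using partner(1)[OF aW] matched_subset x True pa_u edge_sym by auto
    then have "E a (p a)"
      using no_independent_tripleD[OF no_triple, of x a "p a"] partner(2)[OF aW]
        \<open>a \<in> S\<close> \<open>a \<noteq> x\<close> \<open>\<not> E x a\<close> x by auto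
    then show False
      using partner(4)[OF aW] by blast
  next
    case False
    then have "co_matching S E (insert x (insert u W)) (p(x := a, a := x, u := p a, p a := u))"
      using co_matching_augment_path3[OF co_matching aW x u] \<open>\<not> E x a\<close> pa_u edge_sym by blast
    then show False
      using no_augmentation x u False by blast
  qed
qed

lemma partners_adj:
  assumes x: "x \<in> S - W" and a: "a \<in> non_neighbours S E x" and b: "b \<in> non_neighbours S E x"
    and "a \<noteq> b" and w: "w \<in> S - W" "w \<noteq> x" and "\<not> E a w"
  shows "E (p a) (p b)"
proof (rule ccontr)
  assume pa_pb: "\<not> E (p a) (p b)"
  have aW: "a \<in> W" and bW: "b \<in> W"
    using non_neighbour_matched x a b by blast+
  have "a \<in> S" "a \<noteq> x" "\<not> E x a" "b \<in> S" "b \<noteq> x" "\<not> E x b"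
    using a b unfolding non_neighbours_def by auto
  show False
  proof (cases "b = p a")
    case True
    then have "\<not> E a b"
      using partner(4)[OF aW] by blast
    then show False
      using no_independent_tripleD[OF no_triple, of x a b] x \<open>a \<noteq> b\<close>
        \<open>a \<in> S\<close> \<open>a \<noteq> x\<close> \<open>\<not> E x a\<close> \<open>b \<in> S\<close> \<open>b \<noteq> x\<close> \<open>\<not> E x b\<close> by blast
  next
    case False
    then have "co_matching S E (insert x (insert w W))
        (p(w := a, a := w, p a := p b, p b := p a, b := x, x := b))"
      using co_matching_augment_path5[OF co_matching aW bW _ _ x w(1)] \<open>a \<noteq> b\<close> w(2)
        \<open>\<not> E a w\<close> pa_pb \<open>\<not> E x b\<close> edge_sym by metis
    then show False
      using no_augmentation x w by metis
  qed
qed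

definition full_non_neighbours :: "'a \<Rightarrow> 'a set" where
  "full_non_neighbours x = {a \<in> non_neighbours S E x. \<forall>w\<in>S - W - {x}. E a w}"

lemma clique_full_non_neighbours:
  assumes x: "x \<in> S - W"
  shows "is_clique E ((S - W - {x}) \<union> full_non_neighbours x)"
  unfolding is_clique_def
proof (intro ballI impI)
  fix y z assume y: "y \<in> (S - W - {x}) \<union> full_non_neighbours x"
    and z: "z \<in> (S - W - {x}) \<union> full_non_neighbours x" and "y \<noteq> z"
  consider "y \<in> S - W" "z \<in> S - W"
    | "y \<in> S - W - {x}" "z \<in> full_non_neighbours x"
    | "y \<in> full_non_neighbours x" "z \<in> S - W - {x}"
    | "y \<in> non_neighbours S E x" "z \<in> non_neighbours S E x"
    using y z unfolding full_non_neighbours_def by blast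
  then show "E y z"
  proof cases
    case 1
    then show ?thesis
      using clique_unmatched \<open>y \<noteq> z\<close> unfolding is_clique_def by blast
  next
    case 2
    then show ?thesis
      using edge_sym unfolding full_non_neighbours_def by blast
  next
    case 3
    then show ?thesis
      unfolding full_non_neighbours_def by blast
  next
    case 4
    then show ?thesis
      using clique_non_neighbours[OF no_triple] x \<open>y \<noteq> z\<close> unfolding is_clique_def by blast
  qed
qed

lemma clique_unmatched_partners:
  assumes x: "x \<in> S - W" and A: "A \<subseteq> non_neighbours S E x"
    and sparse: "\<And>a b. a \<in> A \<Longrightarrow> b \<in> A \<Longrightarrow> a \<noteq> b \<Longrightarrow>
      a \<notin> full_non_neighbours x \<or> b \<notin> full_non_neighbours x"
  shows "is_clique E ((S - W) \<union> p ` A)"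
proof -
  have partners: "E (p a) (p b)" if ab: "a \<in> A" "b \<in> A" "a \<noteq> b" "a \<notin> full_non_neighbours x" for a b
  proof -
    obtain w where "w \<in> S - W" "w \<noteq> x" "\<not> E a w"
      using ab A unfolding full_non_neighbours_def by auto
    then show ?thesis
      using partners_adj[OF x, of a b w] ab A by blast
  qed
  show ?thesis
    unfolding is_clique_def
  proof (intro ballI impI)
    fix y z assume y: "y \<in> (S - W) \<union> p ` A" and z: "z \<in> (S - W) \<union> p ` A" and "y \<noteq> z"
    consider "y \<in> S - W" "z \<in> S - W"
      | b where "y \<in> S - W" "b \<in> A" "z = p b"
      | a where "a \<in> A" "y = p a" "z \<in> S - W"
      | a b where "a \<in> A" "b \<in> A" "y = p a" "z = p b"
      using y z by blast
    then show "E y z"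
    proof cases
      case 1
      then show ?thesis
        using clique_unmatched \<open>y \<noteq> z\<close> unfolding is_clique_def by blast
    next
      case (2 b)
      then show ?thesis
        using partner_adj_unmatched[OF x, of b y] A edge_sym by blast
    next
      case (3 a)
      then show ?thesis
        using partner_adj_unmatched[OF x, of a z] A by blast
    next
      case (4 a b)
      then have "a \<noteq> b"
        using \<open>y \<noteq> z\<close> by blast
      then show ?thesis
        using sparse[OF 4(1,2)] partners[OF 4(1,2)] partners[OF 4(2,1)] edge_sym 4(3,4) by metis
    qed
  qed
qed

lemma card_unmatched_partners:
  assumes "A \<subseteq> W"
  shows "card ((S - W) \<union> p ` A) = card (S - W) + card A"
proof -
  have "inj_on p A"
    using partner(3) assms by (metis inj_onI subsetD)
  moreover have "finite A"
    using assms finite_W by (rule finite_subset)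
  moreover have "p ` A \<subseteq> W"
    using partner(1) assms by blast
  ultimately have "card ((S - W) \<union> p ` A) = card (S - W) + card (p ` A)"
    using finite_S by (intro card_Un_disjoint) auto
  also have "card (p ` A) = card A"
    using \<open>inj_on p A\<close> by (rule card_image)
  finally show ?thesis .
qed

lemma unmatched_partners_subset: "A \<subseteq> W \<Longrightarrow> (S - W) \<union> p ` A \<subseteq> S"
  using partner(1) matched_subset by blast

lemma unmatched_bound_one_clique:
  assumes x: "x \<in> S - W" and no_full: "full_non_neighbours x = {}"
  shows "2 * card (S - W) + card (non_neighbours S E x) \<le> 2 * omega S E"
proof -
  let ?N = "non_neighbours S E x"
  have N_W: "?N \<subseteq> W"
    using non_neighbour_matched[OF x] by blast
  have "is_clique E ((S - W) \<union> p ` ?N)"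
    using clique_unmatched_partners[OF x subset_refl] no_full by blast
  then have "card ((S - W) \<union> p ` ?N) \<le> omega S E"
    using card_le_omega[OF finite_S unmatched_partners_subset[OF N_W]] by blast
  then show ?thesis
    unfolding card_unmatched_partners[OF N_W] by simp
qed

lemma unmatched_bound_two_cliques:
  assumes x: "x \<in> S - W" and q: "q \<in> full_non_neighbours x"
  shows "2 * card (S - W) + card (non_neighbours S E x) \<le> 2 * omega S E"
proof -
  let ?N = "non_neighbours S E x" and ?F = "full_non_neighbours x"
  let ?A = "insert q (?N - ?F)"
  let ?K1 = "(S - W - {x}) \<union> ?F" and ?K2 = "(S - W) \<union> p ` ?A"
  have N_W: "?N \<subseteq> W"
    using non_neighbour_matched[OF x] by blast
  have F_N: "?F \<subseteq> ?N"
    unfolding full_non_neighbours_def by blast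
  have A_N: "?A \<subseteq> ?N"
    using q F_N by blast
  have finN: "finite ?N"
    using N_W finite_W by (rule finite_subset)
  have "?K1 \<subseteq> S"
    using F_N unfolding non_neighbours_def by blast
  then have K1: "card ?K1 \<le> omega S E"
    using card_le_omega[OF finite_S _ clique_full_non_neighbours[OF x]] by blast
  have "is_clique E ?K2"
    using clique_unmatched_partners[OF x A_N] by blast
  then have K2: "card ?K2 \<le> omega S E"
    using card_le_omega[OF finite_S unmatched_partners_subset] A_N N_W by blast
  have "card ?K1 = card (S - W - {x}) + card ?F"
    using finite_S F_N N_W finN by (intro card_Un_disjoint) (auto intro: finite_subset)
  also have "card (S - W - {x}) = card (S - W) - 1"
    using x finite_S by simp
  finally have "card ?K1 = card (S - W) - 1 + card ?F" .
  moreover have "card (S - W) \<ge> 1"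
    using x finite_S by (auto simp: Suc_le_eq card_gt_0_iff)
  moreover have "card ?K2 = card (S - W) + card ?A"
    by (rule card_unmatched_partners) (use A_N N_W in blast)
  moreover have "card ?A = card (?N - ?F) + 1"
    using q finN by simp
  moreover have "card (?N - ?F) = card ?N - card ?F"
    using F_N finN by (meson card_Diff_subset finite_subset)
  moreover have "card ?F \<le> card ?N"
    using card_mono[OF finN F_N] .
  ultimately show ?thesis
    using K1 K2 by linarith
qed

lemma ex_vertex_unmatched_bound:
  assumes "S \<noteq> {}"
  shows "\<exists>x\<in>S. 2 * card (S - W) + card (non_neighbours S E x) \<le> 2 * omega S E"
proof (cases "S - W = {}")
  case True
  obtain x where "x \<in> S"
    using assms by blast
  moreover have "non_neighbours S E x \<subseteq> S"
    unfolding non_neighbours_def by blast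
  ultimately have "card (non_neighbours S E x) \<le> omega S E"
    using card_le_omega[OF finite_S] clique_non_neighbours[OF no_triple] by blast
  then show ?thesis
    using \<open>x \<in> S\<close> by (intro bexI[of _ x]) (simp_all add: True)
next
  case False
  then obtain x where x: "x \<in> S - W"
    by blast
  then have "2 * card (S - W) + card (non_neighbours S E x) \<le> 2 * omega S E"
    using unmatched_bound_one_clique unmatched_bound_two_cliques by blast
  then show ?thesis
    using x by blast
qed

end

lemma (in simple_edges) chi_no_independent_triple_le:
  assumes "finite S" "S \<noteq> {}" "no_independent_triple S E"
  shows "\<exists>x\<in>S. 4 * chi S E \<le> 2 * omega S E + degree S E x + 1 + card S"
proof -
  obtain W p where "co_matching S E W p"
    and "\<forall>W' p'. co_matching S E W' p' \<longrightarrow> card W' \<le> card W"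
    using ex_maximum_co_matching[OF assms(1)] by blast
  then interpret max_co_matching E S W p
    using assms by unfold_locales auto
  obtain x where x: "x \<in> S"
    and bound: "2 * card (S - W) + card (non_neighbours S E x) \<le> 2 * omega S E"
    using ex_vertex_unmatched_bound[OF assms(2)] by blast
  have "2 * chi S E + card W \<le> 2 * card S"
    using chi_co_matching_le[OF finite_S co_matching] .
  moreover have "card S = Suc (degree S E x + card (non_neighbours S E x))"
    using card_eq_Suc_degree_plus_non_neighbours[OF finite_S x] .
  moreover have "card (S - W) = card S - card W" "card W \<le> card S"
    using card_Diff_subset[OF finite_W matched_subset] card_mono[OF finite_S matched_subset] .
  ultimately show ?thesis
    using bound x by (intro bexI[of _ x]) linarith+
qed

definition excess :: "'a set \<Rightarrow> ('a \<Rightarrow> 'a \<Rightarrow> bool) \<Rightarrow> int" where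
  "excess H E = int (card H) - 3 * int (chi H E)"

lemma finite_excess_values:
  assumes "finite V"
  shows "finite {excess H E | H. H \<subseteq> V \<and> H \<noteq> {}}"
proof (rule finite_subset)
  show "{excess H E | H. H \<subseteq> V \<and> H \<noteq> {}} \<subseteq> (\<lambda>H. excess H E) ` Pow V"
    by blast
  show "finite ((\<lambda>H. excess H E) ` Pow V)"
    using assms by simp
qed

lemma excess_le_eta:
  assumes "finite V" "H \<subseteq> V" "H \<noteq> {}"
  shows "excess H E \<le> eta V E"
  unfolding eta_def excess_def[symmetric]
  using finite_excess_values[OF assms(1)] assms(2,3) by (intro Max_ge) auto

lemma ex_largest_excess_maximiser:
  assumes "finite V" "V \<noteq> {}"
  shows "\<exists>H. H \<subseteq> V \<and> H \<noteq> {} \<and> excess H E = eta V E \<and>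
    (\<forall>H'. H' \<subseteq> V \<and> H' \<noteq> {} \<and> excess H' E = eta V E \<longrightarrow> card H' \<le> card H)"
proof -
  let ?P = "\<lambda>H. H \<subseteq> V \<and> H \<noteq> {} \<and> excess H E = eta V E"
  have "eta V E \<in> {excess H E | H. H \<subseteq> V \<and> H \<noteq> {}}"
    unfolding eta_def excess_def[symmetric]
    using finite_excess_values[OF assms(1)] assms(2) by (intro Max_in) auto
  then obtain H0 where "H0 \<subseteq> V" "H0 \<noteq> {}" "eta V E = excess H0 E"
    by auto
  then have "?P H0"
    by simp
  moreover have "\<forall>H. ?P H \<longrightarrow> card H < card V + 1"
    using card_mono[OF assms(1)] by (simp add: le_imp_less_Suc)
  ultimately show ?thesis
    using ex_has_greatest_nat[of ?P H0 card "card V + 1"] by blast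
qed

locale extremal_subgraph = simple_edges +
  fixes V H :: "'a set"
  assumes finite_V: "finite V"
    and H_sub: "H \<subseteq> V"
    and excess_H: "excess H E = eta V E"
    and largest: "H' \<subseteq> V \<Longrightarrow> H' \<noteq> {} \<Longrightarrow> excess H' E = eta V E \<Longrightarrow> card H' \<le> card H"
begin

lemma finite_H: "finite H"
  using H_sub finite_V by (rule finite_subset)

lemma chi_insert_gt:
  assumes "x \<in> V - H"
  shows "chi H E < chi (insert x H) E"
proof (rule ccontr)
  assume "\<not> chi H E < chi (insert x H) E"
  then have "excess H E < excess (insert x H) E"
    using assms finite_H unfolding excess_def by simp
  moreover have "excess (insert x H) E \<le> eta V E"
    by (rule excess_le_eta[OF finite_V]) (use assms H_sub in auto)
  ultimately show False
    using excess_H by simp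
qed

lemma ex_neighbour_with_colour:
  assumes c: "proper_colouring H E (chi H E) c" and x: "x \<in> V - H" and "i < chi H E"
  shows "\<exists>u\<in>H. E x u \<and> c u = i"
proof (rule ccontr)
  assume "\<not> (\<exists>u\<in>H. E x u \<and> c u = i)"
  then have "proper_colouring (insert x H) E (chi H E) (c(x := i))"
    using proper_colouring_insert[OF c \<open>i < chi H E\<close>] by blast
  then have "chi (insert x H) E \<le> chi H E"
    by (rule chi_le)
  then show False
    using chi_insert_gt[OF x] by simp
qed

lemma chi_plus_degree_le:
  assumes x: "x \<in> V - H"
  shows "chi H E + degree (V - H) E x \<le> degree V E x"
proof -
  obtain c where c: "proper_colouring H E (chi H E) c"
    using ex_chi_colouring[OF finite_H] by blast
  let ?NH = "{u\<in>H. E x u}" and ?NS = "{u\<in>V - H. E x u}"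
  have "{0..<chi H E} \<subseteq> c ` ?NH"
    using ex_neighbour_with_colour[OF c x] by fastforce
  then have "card {0..<chi H E} \<le> card (c ` ?NH)"
    by (rule card_mono[rotated]) (use finite_H in simp)
  then have "chi H E \<le> card (c ` ?NH)"
    by simp
  also have "\<dots> \<le> card ?NH"
    using finite_H by (intro card_image_le) simp
  finally have "chi H E + card ?NS \<le> card ?NH + card ?NS"
    by simp
  also have "\<dots> = card (?NH \<union> ?NS)"
    using finite_H finite_V by (intro card_Un_disjoint[symmetric]) auto
  also have "?NH \<union> ?NS = {u\<in>V. E x u}"
    using H_sub by blast
  finally show ?thesis
    unfolding degree_def .
qed

lemma no_independent_triple_outside: "no_independent_triple (V - H) E"
  unfolding no_independent_triple_def
proof (intro ballI impI)
  fix a b c assume abc: "a \<in> V - H" "b \<in> V - H" "c \<in> V - H" "a \<noteq> b \<and> a \<noteq> c \<and> b \<noteq> c"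
  let ?J = "{a, b, c}"
  show "E a b \<or> E a c \<or> E b c"
  proof (rule ccontr)
    assume "\<not> (E a b \<or> E a c \<or> E b c)"
    then have "\<not> E b a" "\<not> E c a" "\<not> E c b"
      using edge_sym by metis+
    then have "\<forall>u\<in>?J. \<forall>v\<in>?J. \<not> E u v"
      using \<open>\<not> (E a b \<or> E a c \<or> E b c)\<close> edge_irrefl by auto
    then have "chi ?J E \<le> 1"
      by (rule chi_independent_le_1)
    then have "chi (H \<union> ?J) E \<le> chi H E + 1"
      using chi_union_le[OF finite_H, of ?J] by simp
    moreover have "card (H \<union> ?J) = card H + 3"
      using abc finite_H by (simp add: card_Un_disjoint)
    ultimately have "excess H E \<le> excess (H \<union> ?J) E"
      unfolding excess_def by simp
    moreover have "excess (H \<union> ?J) E \<le> eta V E"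
      by (rule excess_le_eta[OF finite_V]) (use abc H_sub in auto)
    ultimately have "card (H \<union> ?J) \<le> card H"
      using largest[of "H \<union> ?J"] excess_H abc H_sub by simp
    then show False
      using \<open>card (H \<union> ?J) = card H + 3\<close> by simp
  qed
qed

lemma four_chi_plus_eta_le:
  "4 * int (chi V E) + eta V E \<le> 2 * int (omega V E) + int (max_degree V E) + 1 + int (card V)"
proof -
  have eta: "eta V E = int (card H) - 3 * int (chi H E)"
    using excess_H unfolding excess_def by simp
  have "4 * chi V E + card H \<le> 2 * omega V E + max_degree V E + 1 + card V + 3 * chi H E"
  proof (cases "V - H = {}")
    case True
    then have "H = V"
      using H_sub by blast
    then show ?thesis
      using chi_le_max_degree_plus_1[OF finite_V] by simp
  next
    case False
    obtain x where x: "x \<in> V - H" and bound: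
      "4 * chi (V - H) E \<le> 2 * omega (V - H) E + degree (V - H) E x + 1 + card (V - H)"
      using chi_no_independent_triple_le[OF _ False no_independent_triple_outside] finite_V by blast
    have "chi V E \<le> chi H E + chi (V - H) E"
      using chi_union_le[OF finite_H, of "V - H"] H_sub finite_V by (simp add: Un_absorb1)
    moreover have "omega (V - H) E \<le> omega V E"
      using omega_mono[OF finite_V] by blast
    moreover have "chi H E + degree (V - H) E x \<le> max_degree V E"
      using chi_plus_degree_le[OF x] degree_le_max_degree[OF finite_V, of x E] x by simp
    moreover have "card V = card H + card (V - H)"
      using H_sub finite_V finite_H by (simp add: card_Diff_subset card_mono)
    ultimately show ?thesis
      using bound by linarith
  qed
  then show ?thesis
    unfolding eta by linarith
qed

end

theorem corollary11:
  fixes V :: "'a set" and E :: "'a \<Rightarrow> 'a \<Rightarrow> bool"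
  assumes "simple_graph V E"
  shows "real (chi V E) \<le>
    (1/2) * (real (omega V E) + (real (max_degree V E) + 1 + real (card V)) / 2)
      - real_of_int (eta V E) / 4"
proof -
  have V: "finite V" "V \<noteq> {}" and edges: "simple_edges E"
    using assms unfolding simple_graph_def simple_edges_def by blast+
  interpret simple_edges E
    by (fact edges)
  obtain H where H: "H \<subseteq> V" "H \<noteq> {}" "excess H E = eta V E"
    and largest: "\<And>H'. H' \<subseteq> V \<Longrightarrow> H' \<noteq> {} \<Longrightarrow> excess H' E = eta V E \<Longrightarrow> card H' \<le> card H"
    using ex_largest_excess_maximiser[OF V] by metis
  interpret extremal_subgraph E V H
    by unfold_locales (use V H largest in auto)
  have "real_of_int (4 * int (chi V E) + eta V E)
      \<le> real_of_int (2 * int (omega V E) + int (max_degree V E) + 1 + int (card V))"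
    using four_chi_plus_eta_le by (simp only: of_int_le_iff)
  then show ?thesis
    by (simp add: field_simps)
qed

end
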